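(* Let $\gamma$ be a nonnegative random variable whose moment generating function is \[ \mathcal{M}_{\gamma}(s)=\mathbb{E}[e^{s\gamma}]=\sum_{k=1}^K c_k\prod_{i=1}^{n_k}\left(1-\frac{s}{a_{k,i}}\right)^{-b_{k,i}}, \] where $\operatorname{Re}[a_{k,i}]>0$ for all $k,i$; $B_k:=\sum_{i=1}^{n_k}b_{k,i}>0$ for every $k$; and $\sum_{k=1}^K c_k=1$. Then for every $p>0$, \[ \mathbb{E}\big[Q(\sqrt{p\gamma})\big]=\frac{1}{2\pi}\sum_{k=1}^K c_k\left\{\prod_{i=1}^{n_k}(a_{k,i})^{b_{k,i}}\right\}\left(\frac2p\right)^{B_k}\int_0^1 u^{-\frac12+B_k}(1-u)^{-\frac12}\prod_{i=1}^{n_k}\left(1+\frac{2a_{k,i}}{p}u\right)^{-b_{k,i}}du. \]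
   Context: $Q(x)=\frac{1}{\sqrt{2\pi}}\int_x^\infty e^{-t^2/2}\,dt$ is the Gaussian $Q$-function. The moment generating function of a nonnegative random variable with density $f_\gamma$ is $\mathcal{M}_\gamma(s)=\mathbb{E}[e^{s\gamma}]$ (Laplace transform of $f_\gamma$ at $-s$); complex powers use the principal branch. *)

theory Defs
  imports "HOL-Probability.Probability"
begin

definition Qfun :: "real \<Rightarrow> real" where
  "Qfun x = (1 / sqrt (2 * pi)) * (LBINT t:{x..}. exp (- (t\<^sup>2) / 2))"

end

theory Submission
  imports Defs
begin

text \<open>
  Craig's formula \<open>\<pi> Q(x) = \<integral>\<^sub>0\<^sup>1 exp(-x\<^sup>2/(2u)) / (2\<surd>(u(1-u))) du\<close> comes from writing
  \<open>\<surd>(2\<pi>) Q(x)\<close> as the double integral of \<open>y exp(-y\<^sup>2(1+t\<^sup>2)/2)\<close> over \<open>y \<ge> x, t > 0\<close>,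
  integrating in the other order and substituting \<open>u = 1/(1+t\<^sup>2)\<close>.
  Applied to \<open>x = \<surd>(p\<gamma>)\<close> and integrated against the law of \<open>\<gamma>\<close> (Tonelli), it turns
  \<open>\<pi> E[Q(\<surd>(p\<gamma>))]\<close> into the integral of the weight \<open>1/(2\<surd>(u(1-u)))\<close> against the moment
  generating function at \<open>s = -p/(2u) \<le> 0\<close>. On the principal branch, and because all
  \<open>Re a > 0\<close>, each factor splits as
  \<open>(1 + p/(2ua))\<^sup>-\<^sup>b = a\<^sup>b (2/p)\<^sup>b u\<^sup>b (1 + 2au/p)\<^sup>-\<^sup>b\<close>, which gives the stated integrands;
  \<open>Re B > 0\<close> makes them integrable at \<open>u = 0\<close>.
\<close>

lemma nn_integral_exp_neg_square_pos:
  "(\<integral>\<^sup>+s. ennreal (exp (- s\<^sup>2)) * indicator {0<..} s \<partial>lborel) = ennreal (sqrt pi / 2)"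
proof -
  have "(\<integral>\<^sup>+s. ennreal (exp (- s\<^sup>2)) * indicator {0<..} s \<partial>lborel)
      = (\<integral>\<^sup>+s. ennreal (indicator {0..} s *\<^sub>R exp (- s\<^sup>2)) \<partial>lborel)"
    by (intro nn_integral_cong_AE AE_I[where N="{0}"]) (auto split: split_indicator)
  also have "\<dots> = ennreal (sqrt pi / 2)"
    using gaussian_moment_0
    by (subst nn_integral_eq_integral) (auto simp: has_bochner_integral_iff)
  finally show ?thesis .
qed

lemma integrable_exp_neg_square_half: "integrable lborel (\<lambda>y::real. exp (- y\<^sup>2 / 2))"
proof -
  have "integrable lborel (\<lambda>y. sqrt (2 * pi) * normal_density 0 1 y)"
    by (intro integrable_mult_right integrable_normal_density) simp
  then show ?thesis
    by (simp add: normal_density_def)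
qed

lemma nn_integral_Qfun:
  "(\<integral>\<^sup>+y. ennreal (exp (- y\<^sup>2 / 2)) * indicator {x..} y \<partial>lborel) = ennreal (sqrt (2 * pi) * Qfun x)"
proof -
  have "integrable lborel (\<lambda>y. indicator {x..} y *\<^sub>R exp (- y\<^sup>2 / 2))"
    by (intro integrable_mult_indicator integrable_exp_neg_square_half) auto
  then have "(\<integral>\<^sup>+y. ennreal (indicator {x..} y *\<^sub>R exp (- y\<^sup>2 / 2)) \<partial>lborel)
      = ennreal (LBINT y:{x..}. exp (- y\<^sup>2 / 2))"
    by (subst nn_integral_eq_integral) (auto simp: set_lebesgue_integral_def)
  moreover have "(\<lambda>y. ennreal (indicator {x..} y *\<^sub>R exp (- y\<^sup>2 / 2)))
      = (\<lambda>y. ennreal (exp (- y\<^sup>2 / 2)) * indicator {x..} y)"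
    by (auto split: split_indicator)
  ultimately show ?thesis
    by (simp add: Qfun_def)
qed

lemma Qfun_nonneg: "0 \<le> Qfun x"
  unfolding Qfun_def set_lebesgue_integral_def
  by (intro mult_nonneg_nonneg integral_nonneg) (auto simp: indicator_def)

lemma antimono_Qfun: "antimono Qfun"
proof (rule antimonoI)
  fix x y :: real
  assume "x \<le> y"
  have "integrable lborel (\<lambda>t. indicator {z..} t *\<^sub>R exp (- t\<^sup>2 / 2))" for z :: real
    by (intro integrable_mult_indicator integrable_exp_neg_square_half) auto
  with \<open>x \<le> y\<close> have "(LBINT t:{y..}. exp (- t\<^sup>2 / 2)) \<le> (LBINT t:{x..}. exp (- t\<^sup>2 / 2))"
    unfolding set_lebesgue_integral_def by (intro integral_mono) (auto simp: indicator_def)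
  then show "Qfun y \<le> Qfun x"
    unfolding Qfun_def by (simp add: divide_right_mono)
qed

lemma borel_measurable_Qfun [measurable]: "Qfun \<in> borel_measurable borel"
proof -
  have "mono (\<lambda>x. - Qfun x)"
    using antimono_Qfun by (auto simp: mono_def antimono_def)
  then have "(\<lambda>x. - (- Qfun x)) \<in> borel_measurable borel"
    by (intro borel_measurable_uminus borel_measurable_mono)
  then show ?thesis by simp
qed

section \<open>Craig's formula\<close>

lemma nn_integral_radial_gaussian_tail:
  fixes x t :: real
  assumes "0 \<le> x"
  shows "(\<integral>\<^sup>+y. ennreal (y * exp (- (y\<^sup>2 * (1 + t\<^sup>2)) / 2)) * indicator {x..} y \<partial>lborel)
       = ennreal (exp (- (x\<^sup>2 * (1 + t\<^sup>2)) / 2) / (1 + t\<^sup>2))"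
proof -
  have pos: "0 < 1 + t\<^sup>2"
    by (simp add: add_pos_nonneg)
  have "(\<integral>\<^sup>+y. ennreal (y * exp (- (y\<^sup>2 * (1 + t\<^sup>2)) / 2)) * indicator {x..} y \<partial>lborel)
      = 0 - (- exp (- (x\<^sup>2 * (1 + t\<^sup>2)) / 2) / (1 + t\<^sup>2))"
  proof (rule nn_integral_FTC_atLeast)
    have "filterlim (\<lambda>y::real. (1 + t\<^sup>2) / 2 * y\<^sup>2) at_top at_top"
      using pos by (intro filterlim_tendsto_pos_mult_at_top[OF tendsto_const] filterlim_pow_at_top
          filterlim_ident) auto
    then have "((\<lambda>y::real. exp (- ((1 + t\<^sup>2) / 2 * y\<^sup>2))) \<longlongrightarrow> 0) at_top"
      by (rule filterlim_compose[OF exp_at_bot filterlim_compose[OF filterlim_uminus_at_bot_at_top]])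
    then have "((\<lambda>y::real. - exp (- ((1 + t\<^sup>2) / 2 * y\<^sup>2)) / (1 + t\<^sup>2)) \<longlongrightarrow> - 0 / (1 + t\<^sup>2)) at_top"
      using pos by (intro tendsto_intros) auto
    then show "((\<lambda>y. - exp (- (y\<^sup>2 * (1 + t\<^sup>2)) / 2) / (1 + t\<^sup>2)) \<longlongrightarrow> 0) at_top"
      by (simp add: mult.commute)
    show "((\<lambda>y. - exp (- (y\<^sup>2 * (1 + t\<^sup>2)) / 2) / (1 + t\<^sup>2)) has_real_derivative
        y * exp (- (y\<^sup>2 * (1 + t\<^sup>2)) / 2)) (at y)" for y
    proof -
      have "((\<lambda>y. - exp (- (y\<^sup>2 * (1 + t\<^sup>2)) / 2) / (1 + t\<^sup>2)) has_real_derivative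
          - (exp (- (y\<^sup>2 * (1 + t\<^sup>2)) / 2) * (- (2 * y * (1 + t\<^sup>2)) / 2)) / (1 + t\<^sup>2)) (at y)"
        by (auto intro!: derivative_eq_intros)
      moreover have "- (exp (- (y\<^sup>2 * (1 + t\<^sup>2)) / 2) * (- (2 * y * (1 + t\<^sup>2)) / 2)) / (1 + t\<^sup>2)
          = y * exp (- (y\<^sup>2 * (1 + t\<^sup>2)) / 2)"
        using pos by (simp add: field_simps)
      ultimately show ?thesis by simp
    qed
  qed (use assms in auto)
  then show ?thesis by simp
qed

lemma nn_integral_radial_gaussian_slope:
  fixes y :: real
  assumes "0 < y"
  shows "(\<integral>\<^sup>+t. ennreal (y * exp (- (y\<^sup>2 * (1 + t\<^sup>2)) / 2)) * indicator {0<..} t \<partial>lborel)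
       = ennreal (sqrt 2 * (sqrt pi / 2) * exp (- y\<^sup>2 / 2))"
proof -
  define c where "c = sqrt 2 / y"
  have c: "c > 0"
    using assms by (simp add: c_def)
  have split: "ennreal (y * exp (- (y\<^sup>2 * (1 + (0 + c * s)\<^sup>2)) / 2)) * indicator {0<..} (0 + c * s)
      = ennreal (y * exp (- y\<^sup>2 / 2)) * (ennreal (exp (- s\<^sup>2)) * indicator {0<..} s)" for s
  proof -
    have "y\<^sup>2 * (1 + (c * s)\<^sup>2) / 2 = y\<^sup>2 / 2 + s\<^sup>2"
      using assms by (simp add: c_def power_mult_distrib field_simps)
    then have "exp (- (y\<^sup>2 * (1 + (0 + c * s)\<^sup>2)) / 2) = exp (- y\<^sup>2 / 2) * exp (- s\<^sup>2)"
      by (simp add: exp_add[symmetric] minus_divide_left[symmetric])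
    moreover have "(0 < c * s) = (0 < s)"
      using c by (simp add: zero_less_mult_iff)
    ultimately show ?thesis
      using assms by (auto simp: ennreal_mult'[symmetric] ennreal_mult[symmetric] split: split_indicator)
  qed
  have "(\<integral>\<^sup>+t. ennreal (y * exp (- (y\<^sup>2 * (1 + t\<^sup>2)) / 2)) * indicator {0<..} t \<partial>lborel)
      = ennreal \<bar>c\<bar> * (\<integral>\<^sup>+s. ennreal (y * exp (- (y\<^sup>2 * (1 + (0 + c * s)\<^sup>2)) / 2))
          * indicator {0<..} (0 + c * s) \<partial>lborel)"
    using c by (intro nn_integral_real_affine) auto
  also have "\<dots> = ennreal c * (\<integral>\<^sup>+s. ennreal (y * exp (- y\<^sup>2 / 2)) * (ennreal (exp (- s\<^sup>2)) * indicator {0<..} s) \<partial>lborel)"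
    by (simp only: split abs_of_pos[OF c])
  also have "\<dots> = ennreal c * (ennreal (y * exp (- y\<^sup>2 / 2)) * ennreal (sqrt pi / 2))"
    by (subst nn_integral_cmult) (auto simp: nn_integral_exp_neg_square_pos)
  also have "\<dots> = ennreal (sqrt 2 * (sqrt pi / 2) * exp (- y\<^sup>2 / 2))"
    using c assms by (simp add: ennreal_mult[symmetric] c_def)
  finally show ?thesis .
qed

lemma nn_integral_Qfun_slope_form:
  fixes x :: real
  assumes x: "0 \<le> x"
  shows "(\<integral>\<^sup>+t. ennreal (exp (- (x\<^sup>2 * (1 + t\<^sup>2)) / 2) / (1 + t\<^sup>2)) * indicator {0<..} t \<partial>lborel)
       = ennreal (pi * Qfun x)"
proof -
  let ?G = "\<lambda>y t. ennreal (y * exp (- (y\<^sup>2 * (1 + t\<^sup>2)) / 2)) * indicator {x..} y * indicator {0<..} t"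
  have inner: "(\<integral>\<^sup>+t. ?G y t \<partial>lborel)
      = ennreal (sqrt 2 * (sqrt pi / 2)) * (ennreal (exp (- y\<^sup>2 / 2)) * indicator {x..} y)"
    if "y \<noteq> 0" for y
  proof (cases "x \<le> y")
    case True
    with x that have "0 < y" by auto
    have "(\<integral>\<^sup>+t. ?G y t \<partial>lborel)
        = (\<integral>\<^sup>+t. ennreal (y * exp (- (y\<^sup>2 * (1 + t\<^sup>2)) / 2)) * indicator {0<..} t \<partial>lborel)"
      using True by simp
    also have "\<dots> = ennreal (sqrt 2 * (sqrt pi / 2) * exp (- y\<^sup>2 / 2))"
      by (rule nn_integral_radial_gaussian_slope[OF \<open>0 < y\<close>])
    finally show ?thesis
      using True by (simp add: ennreal_mult[symmetric] field_simps)
  qed simp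
  have "(\<integral>\<^sup>+t. ennreal (exp (- (x\<^sup>2 * (1 + t\<^sup>2)) / 2) / (1 + t\<^sup>2)) * indicator {0<..} t \<partial>lborel)
      = (\<integral>\<^sup>+t. \<integral>\<^sup>+y. ?G y t \<partial>lborel \<partial>lborel)"
    by (intro nn_integral_cong, subst nn_integral_radial_gaussian_tail[OF x, symmetric])
      (simp add: nn_integral_multc)
  also have "\<dots> = (\<integral>\<^sup>+y. \<integral>\<^sup>+t. ?G y t \<partial>lborel \<partial>lborel)"
    by (rule lborel_pair.Fubini') auto
  also have "\<dots> = (\<integral>\<^sup>+y. ennreal (sqrt 2 * (sqrt pi / 2)) * (ennreal (exp (- y\<^sup>2 / 2)) * indicator {x..} y) \<partial>lborel)"
    by (intro nn_integral_cong_AE eventually_mono[OF AE_lborel_singleton[of 0]] inner) simp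
  also have "\<dots> = ennreal (sqrt 2 * (sqrt pi / 2)) * ennreal (sqrt (2 * pi) * Qfun x)"
    using nn_integral_Qfun[of x] by (subst nn_integral_cmult) auto
  also have "\<dots> = ennreal (sqrt 2 * (sqrt pi / 2) * (sqrt (2 * pi) * Qfun x))"
    using Qfun_nonneg[of x] by (simp add: ennreal_mult[symmetric])
  also have "sqrt 2 * (sqrt pi / 2) * (sqrt (2 * pi) * Qfun x) = (sqrt 2)\<^sup>2 * (sqrt pi)\<^sup>2 / 2 * Qfun x"
    by (simp only: real_sqrt_mult power2_eq_square) (simp add: algebra_simps)
  finally show ?thesis
    by simp
qed

lemma Qfun_slope_form_has_integral:
  fixes x :: real
  assumes "0 \<le> x"
  shows "((\<lambda>t. exp (- (x\<^sup>2 * (1 + t\<^sup>2)) / 2) / (1 + t\<^sup>2)) has_integral pi * Qfun x) {0<..}"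
proof -
  let ?f = "\<lambda>t::real. exp (- (x\<^sup>2 * (1 + t\<^sup>2)) / 2) / (1 + t\<^sup>2)"
  have pos: "0 < 1 + t\<^sup>2" for t :: real
    by (simp add: add_pos_nonneg)
  have "((\<lambda>t. indicator {0<..} t * ?f t) has_integral pi * Qfun x) UNIV"
  proof (rule nn_integral_has_integral)
    have "(\<lambda>t. ennreal (indicator {0<..} t * ?f t)) = (\<lambda>t. ennreal (?f t) * indicator {0<..} t)"
      by (auto split: split_indicator)
    then show "(\<integral>\<^sup>+t. ennreal (indicator {0<..} t * ?f t) \<partial>lborel) = ennreal (pi * Qfun x)"
      using nn_integral_Qfun_slope_form[OF assms] by simp
  qed (use pos Qfun_nonneg in auto)
  moreover have "(\<lambda>t. indicator {0<..} t * ?f t) = (\<lambda>t. if t \<in> {0<..} then ?f t else 0)"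
    by (auto simp: fun_eq_iff)
  ultimately show ?thesis
    by (simp only: has_integral_restrict_UNIV)
qed

lemma Qfun_slope_form_absolutely_integrable:
  fixes x :: real
  assumes "0 \<le> x"
  shows "(\<lambda>t. exp (- (x\<^sup>2 * (1 + t\<^sup>2)) / 2) / (1 + t\<^sup>2)) absolutely_integrable_on {0<..}"
proof (rule nonnegative_absolutely_integrable_1)
  show "(\<lambda>t. exp (- (x\<^sup>2 * (1 + t\<^sup>2)) / 2) / (1 + t\<^sup>2)) integrable_on {0<..}"
    using Qfun_slope_form_has_integral[OF assms] by (rule has_integral_integrable)
qed (simp add: add_pos_nonneg less_imp_le)

lemma craig_substitution_has_derivative:
  fixes u :: real
  assumes "0 < u" "u < 1"
  shows "((\<lambda>u. sqrt ((1 - u) / u)) has_real_derivative - 1 / (2 * u\<^sup>2 * sqrt ((1 - u) / u))) (at u)"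
proof -
  have "((\<lambda>u. sqrt ((1 - u) / u)) has_real_derivative
      (1 / (2 * sqrt ((1 - u) / u))) * ((- 1 * u - (1 - u) * 1) / (u * u))) (at u)"
    using assms by (auto intro!: derivative_eq_intros simp: inverse_eq_divide divide_less_0_iff)
  moreover have "(1 / (2 * sqrt ((1 - u) / u))) * ((- 1 * u - (1 - u) * 1) / (u * u))
      = - 1 / (2 * u\<^sup>2 * sqrt ((1 - u) / u))"
    using assms by (simp add: power2_eq_square field_simps)
  ultimately show ?thesis by (simp only:)
qed

lemma bij_betw_craig_substitution: "bij_betw (\<lambda>u. sqrt ((1 - u) / u)) {0<..<1::real} {0<..}"
proof (rule bij_betw_imageI)
  show "inj_on (\<lambda>u. sqrt ((1 - u) / u)) {0<..<1::real}"
  proof (rule inj_onI)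
    fix u v :: real
    assume "u \<in> {0<..<1}" "v \<in> {0<..<1}" "sqrt ((1 - u) / u) = sqrt ((1 - v) / v)"
    then have "1 / u - 1 = 1 / v - 1"
      by (simp add: diff_divide_distrib)
    then show "u = v" by simp
  qed
  show "(\<lambda>u. sqrt ((1 - u) / u)) ` {0<..<1} = {0<..}"
  proof (intro equalityI subsetI)
    fix t :: real
    assume t: "t \<in> {0<..}"
    have pos: "0 < 1 + t\<^sup>2"
      by (simp add: add_pos_nonneg)
    then have "(1 - 1 / (1 + t\<^sup>2)) / (1 / (1 + t\<^sup>2)) = t\<^sup>2"
      by (simp add: field_simps)
    then have "1 / (1 + t\<^sup>2) \<in> {0<..<1}" and "sqrt ((1 - 1 / (1 + t\<^sup>2)) / (1 / (1 + t\<^sup>2))) = t"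
      using pos t by auto
    then show "t \<in> (\<lambda>u. sqrt ((1 - u) / u)) ` {0<..<1}"
      by (intro image_eqI[where x="1 / (1 + t\<^sup>2)"]) simp_all
  qed auto
qed

lemma craig_substitution_jacobian:
  fixes x u :: real
  assumes "0 < u" "u < 1"
  shows "\<bar>- 1 / (2 * u\<^sup>2 * sqrt ((1 - u) / u))\<bar>
           * (exp (- (x\<^sup>2 * (1 + (sqrt ((1 - u) / u))\<^sup>2)) / 2) / (1 + (sqrt ((1 - u) / u))\<^sup>2))
       = exp (- x\<^sup>2 / (2 * u)) / (2 * sqrt (u * (1 - u)))"
proof -
  have "1 + (sqrt ((1 - u) / u))\<^sup>2 = 1 / u"
    using assms by (simp add: diff_divide_distrib)
  then have "exp (- (x\<^sup>2 * (1 + (sqrt ((1 - u) / u))\<^sup>2)) / 2) / (1 + (sqrt ((1 - u) / u))\<^sup>2)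
      = u * exp (- x\<^sup>2 / (2 * u))"
    by simp
  moreover have "\<bar>- 1 / (2 * u\<^sup>2 * sqrt ((1 - u) / u))\<bar> = 1 / (2 * u * (u * sqrt ((1 - u) / u)))"
    using assms by (simp add: power2_eq_square mult_ac)
  ultimately have "\<bar>- 1 / (2 * u\<^sup>2 * sqrt ((1 - u) / u))\<bar>
           * (exp (- (x\<^sup>2 * (1 + (sqrt ((1 - u) / u))\<^sup>2)) / 2) / (1 + (sqrt ((1 - u) / u))\<^sup>2))
      = exp (- x\<^sup>2 / (2 * u)) / (2 * (u * sqrt ((1 - u) / u)))"
    using assms by simp
  also have "u * sqrt ((1 - u) / u) = sqrt (u\<^sup>2 * ((1 - u) / u))"
    using assms by (simp only: real_sqrt_mult real_sqrt_abs abs_of_pos)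
  also have "u\<^sup>2 * ((1 - u) / u) = u * (1 - u)"
    using assms by (simp add: power2_eq_square)
  finally show ?thesis .
qed

definition craig_weight :: "real \<Rightarrow> real" where
  "craig_weight u = 1 / (2 * sqrt (u * (1 - u)))"

theorem nn_integral_Qfun_Craig:
  fixes x :: real
  assumes "0 \<le> x"
  shows "(\<integral>\<^sup>+u. ennreal (craig_weight u * exp (- x\<^sup>2 / (2 * u))) * indicator {0<..<1} u \<partial>lborel)
       = ennreal (pi * Qfun x)"
proof -
  let ?g = "\<lambda>u::real. sqrt ((1 - u) / u)"
  let ?g' = "\<lambda>u::real. - 1 / (2 * u\<^sup>2 * sqrt ((1 - u) / u))"
  let ?f = "\<lambda>t::real. exp (- (x\<^sup>2 * (1 + t\<^sup>2)) / 2) / (1 + t\<^sup>2)"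
  let ?h = "\<lambda>u. \<bar>?g' u\<bar> * ?f (?g u)"
  have inj: "inj_on ?g {0<..<1}" and img: "?g ` {0<..<1} = {0<..}"
    using bij_betw_craig_substitution by (simp_all add: bij_betw_def)
  have der: "(?g has_field_derivative ?g' u) (at u within {0<..<1})" if "u \<in> {0<..<1}" for u
    using that by (intro has_field_derivative_at_within[OF craig_substitution_has_derivative]) auto
  have "?f absolutely_integrable_on {0<..}"
    using assms by (rule Qfun_slope_form_absolutely_integrable)
  moreover have "integral {0<..} ?f = pi * Qfun x"
    using Qfun_slope_form_has_integral[OF assms] by (rule integral_unique)
  ultimately have h: "?h absolutely_integrable_on {0<..<1} \<and> integral {0<..<1} ?h = pi * Qfun x"
    by (intro has_absolute_integral_change_of_variables_1'[OF _ der inj, THEN iffD2]) (simp_all add: img)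
  then have "(?h has_integral integral {0<..<1} ?h) {0<..<1}"
    by (intro integrable_integral set_lebesgue_integral_eq_integral(1)) simp
  then have "(?h has_integral pi * Qfun x) {0<..<1}"
    using h by simp
  moreover have "?h u = craig_weight u * exp (- x\<^sup>2 / (2 * u))" if "u \<in> {0<..<1}" for u
  proof -
    from that have "0 < u" "u < 1" by auto
    then show ?thesis
      by (simp only: craig_substitution_jacobian craig_weight_def) simp
  qed
  ultimately have "((\<lambda>u. craig_weight u * exp (- x\<^sup>2 / (2 * u))) has_integral pi * Qfun x) {0<..<1}"
    by (rule has_integral_cong[THEN iffD1, rotated])
  then show ?thesis
    by (rule nn_integral_has_integral_lebesgue'[rotated]) (simp add: craig_weight_def)
qed

lemma set_integrable_craig_weight: "set_integrable lborel {0<..<1} craig_weight"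
proof -
  have "(\<integral>\<^sup>+u. ennreal (indicator {0<..<1} u *\<^sub>R craig_weight u) \<partial>lborel)
      = (\<integral>\<^sup>+u. ennreal (craig_weight u * exp (- 0\<^sup>2 / (2 * u))) * indicator {0<..<1} u \<partial>lborel)"
    by (intro nn_integral_cong) (simp split: split_indicator)
  also have "\<dots> = ennreal (pi * Qfun 0)"
    by (rule nn_integral_Qfun_Craig) simp
  finally show ?thesis
    unfolding set_integrable_def
    by (intro integrableI_nonneg) (auto simp: indicator_def craig_weight_def)
qed

section \<open>Averaging Craig's formula over \<open>\<gamma>\<close>\<close>

lemma (in prob_space) integrable_exp_nonpos_mult:
  fixes \<gamma> :: "'a \<Rightarrow> real"
  assumes [measurable]: "\<gamma> \<in> borel_measurable M"
    and "AE \<omega> in M. 0 \<le> \<gamma> \<omega>" and "s \<le> 0"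
  shows "integrable M (\<lambda>\<omega>. exp (s * \<gamma> \<omega>))"
proof (rule integrable_const_bound[where B=1])
  show "AE \<omega> in M. norm (exp (s * \<gamma> \<omega>)) \<le> 1"
    using assms(2) by eventually_elim (simp add: assms(3) mult_nonpos_nonneg)
qed measurable

lemma (in prob_space) nn_integral_craig_weight_exp:
  fixes \<gamma> :: "'a \<Rightarrow> real" and p u :: real
  assumes [measurable]: "\<gamma> \<in> borel_measurable M"
    and nonneg: "AE \<omega> in M. 0 \<le> \<gamma> \<omega>" and "0 < p" and u: "0 < u" "u < 1"
  shows "(\<integral>\<^sup>+\<omega>. ennreal (craig_weight u * exp (- (sqrt (p * \<gamma> \<omega>))\<^sup>2 / (2 * u))) \<partial>M)
       = ennreal (craig_weight u * expectation (\<lambda>\<omega>. exp ((- p / (2 * u)) * \<gamma> \<omega>)))"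
proof -
  have int: "integrable M (\<lambda>\<omega>. exp ((- p / (2 * u)) * \<gamma> \<omega>))"
    using assms by (intro integrable_exp_nonpos_mult) (auto simp: divide_nonneg_pos)
  have "(\<integral>\<^sup>+\<omega>. ennreal (craig_weight u * exp (- (sqrt (p * \<gamma> \<omega>))\<^sup>2 / (2 * u))) \<partial>M)
      = (\<integral>\<^sup>+\<omega>. ennreal (craig_weight u * exp ((- p / (2 * u)) * \<gamma> \<omega>)) \<partial>M)"
    using nonneg
  proof (intro nn_integral_cong_AE, eventually_elim)
    case (elim \<omega>)
    with \<open>0 < p\<close> show ?case
      by simp
  qed
  also have "\<dots> = ennreal (craig_weight u * expectation (\<lambda>\<omega>. exp ((- p / (2 * u)) * \<gamma> \<omega>)))"
    using int u by (subst nn_integral_eq_integral) (auto simp: craig_weight_def)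
  finally show ?thesis .
qed

theorem (in prob_space) expectation_Qfun_Craig:
  fixes \<gamma> :: "'a \<Rightarrow> real" and p :: real
  assumes \<gamma>[measurable]: "\<gamma> \<in> borel_measurable M"
    and nonneg: "AE \<omega> in M. 0 \<le> \<gamma> \<omega>" and p: "0 < p"
  shows "pi * expectation (\<lambda>\<omega>. Qfun (sqrt (p * \<gamma> \<omega>)))
       = (LBINT u:{0<..<1}. craig_weight u * expectation (\<lambda>\<omega>. exp ((- p / (2 * u)) * \<gamma> \<omega>)))"
proof -
  interpret P: pair_sigma_finite M lborel
    by (intro pair_sigma_finite.intro sigma_finite_measure_axioms lborel.sigma_finite_measure_axioms)
  let ?L = "\<lambda>u. expectation (\<lambda>\<omega>. exp ((- p / (2 * u)) * \<gamma> \<omega>))"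
  let ?F = "\<lambda>\<omega> u. ennreal (craig_weight u * exp (- (sqrt (p * \<gamma> \<omega>))\<^sup>2 / (2 * u))) * indicator {0<..<1} u"
  have [measurable]: "craig_weight \<in> borel_measurable borel"
    unfolding craig_weight_def by measurable
  have "expectation (\<lambda>\<omega>. pi * Qfun (sqrt (p * \<gamma> \<omega>)))
      = enn2real (\<integral>\<^sup>+\<omega>. ennreal (pi * Qfun (sqrt (p * \<gamma> \<omega>))) \<partial>M)"
    by (rule integral_eq_nn_integral) (auto intro!: mult_nonneg_nonneg Qfun_nonneg)
  also have "(\<integral>\<^sup>+\<omega>. ennreal (pi * Qfun (sqrt (p * \<gamma> \<omega>))) \<partial>M) = (\<integral>\<^sup>+\<omega>. \<integral>\<^sup>+u. ?F \<omega> u \<partial>lborel \<partial>M)"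
  proof (intro nn_integral_cong_AE eventually_mono[OF nonneg])
    fix \<omega>
    assume "0 \<le> \<gamma> \<omega>"
    with p show "ennreal (pi * Qfun (sqrt (p * \<gamma> \<omega>))) = (\<integral>\<^sup>+u. ?F \<omega> u \<partial>lborel)"
      by (intro nn_integral_Qfun_Craig[symmetric]) simp
  qed
  also have "\<dots> = (\<integral>\<^sup>+u. \<integral>\<^sup>+\<omega>. ?F \<omega> u \<partial>M \<partial>lborel)"
    by (rule P.Fubini'[symmetric]) measurable
  also have "\<dots> = (\<integral>\<^sup>+u. ennreal (indicator {0<..<1} u * (craig_weight u * ?L u)) \<partial>lborel)"
    using nn_integral_craig_weight_exp[OF \<gamma> nonneg p]
    by (intro nn_integral_cong) (simp add: nn_integral_multc split: split_indicator)
  also have "enn2real \<dots> = (LBINT u:{0<..<1}. craig_weight u * ?L u)"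
  proof -
    have "(\<lambda>u. ?L u) \<in> borel_measurable lborel"
      by (rule borel_measurable_lebesgue_integral[where f="\<lambda>u \<omega>. exp ((- p / (2 * u)) * \<gamma> \<omega>)"])
        measurable
    then show ?thesis
      unfolding set_lebesgue_integral_def
      by (subst integral_eq_nn_integral)
        (auto intro!: mult_nonneg_nonneg integral_nonneg simp: indicator_def craig_weight_def)
  qed
  finally show ?thesis
    by simp
qed

section \<open>Splitting the moment generating function on the principal branch\<close>

lemma Ln_divide_Re_pos:
  fixes z w :: complex
  assumes z: "0 < Re z" and w: "0 < Re w"
  shows "Ln (z / w) = Ln z - Ln w"
proof -
  have "w \<notin> \<real>\<^sub>\<le>\<^sub>0"
    using w by (auto simp: complex_nonpos_Reals_iff)
  then have inv: "Ln (inverse w) = - Ln w"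
    by (rule Ln_inverse)
  have "\<bar>Im (Ln z)\<bar> < pi / 2" and "\<bar>Im (Ln w)\<bar> < pi / 2"
    by (rule Re_Ln_pos_lt_imp[OF z], rule Re_Ln_pos_lt_imp[OF w])
  then have "Ln (z * inverse w) = Ln z + Ln (inverse w)"
    using z w by (intro Ln_times_simple) (auto simp: inv abs_less_iff)
  then show ?thesis
    by (simp add: divide_complex_def inv)
qed

lemma one_plus_inverse_powr:
  fixes a b :: complex and r :: real
  assumes a: "0 < Re a" and r: "0 < r"
  shows "(1 + 1 / (complex_of_real r * a)) powr (- b)
       = a powr b * complex_of_real r powr b * (1 + complex_of_real r * a) powr (- b)"
proof -
  have "a \<noteq> 0"
    using a by auto
  define w where "w = complex_of_real r * a"
  have Rw: "0 < Re w"
    using a r by (simp add: w_def)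
  then have Rz: "0 < Re (1 + w)"
    by simp
  have "w \<noteq> 0" "1 + w \<noteq> 0"
    using Rw Rz by (metis less_irrefl zero_complex.sel(1))+
  then have "1 + 1 / w = (1 + w) / w"
    by (simp add: field_simps)
  moreover have "Ln w = of_real (ln r) + Ln a"
    using \<open>a \<noteq> 0\<close> r unfolding w_def by (simp add: Ln_times_of_real Ln_of_real)
  ultimately have "(1 + 1 / w) powr (- b) = exp (b * Ln a) * exp (b * of_real (ln r)) * exp (- b * Ln (1 + w))"
    using \<open>w \<noteq> 0\<close> \<open>1 + w \<noteq> 0\<close>
    by (simp add: powr_def Ln_divide_Re_pos[OF Rz Rw] exp_add[symmetric] algebra_simps)
  also have "\<dots> = a powr b * complex_of_real r powr b * (1 + w) powr (- b)"
    using a r \<open>1 + w \<noteq> 0\<close> by (auto simp: powr_def Ln_of_real)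
  finally show ?thesis
    by (simp add: w_def)
qed

lemma craig_weight_eq_powr:
  fixes u :: real
  assumes "0 < u" "u < 1"
  shows "craig_weight u = 1 / 2 * (u powr (- 1 / 2) * (1 - u) powr (- 1 / 2))"
  using assms
  by (simp add: craig_weight_def powr_minus_divide powr_half_sqrt[symmetric] powr_mult[symmetric])

lemma craig_weight_mgf_factorization:
  fixes a b :: "nat \<Rightarrow> complex" and I :: "nat set" and u p :: real
  assumes a: "\<And>i. i \<in> I \<Longrightarrow> 0 < Re (a i)" and u: "0 < u" "u < 1" and p: "0 < p"
  shows "complex_of_real (craig_weight u) * (\<Prod>i\<in>I. (1 - complex_of_real (- p / (2 * u)) / a i) powr (- b i))
       = 1 / 2 * (\<Prod>i\<in>I. a i powr b i) * complex_of_real (2 / p) powr (\<Sum>i\<in>I. b i)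
         * (complex_of_real u powr (- 1 / 2 + (\<Sum>i\<in>I. b i)) * complex_of_real (1 - u) powr (- 1 / 2)
            * (\<Prod>i\<in>I. (1 + 2 * a i / complex_of_real p * complex_of_real u) powr (- b i)))"
proof -
  define r where "r = 2 * u / p"
  have r: "0 < r"
    using u p by (simp add: r_def)
  have "1 - complex_of_real (- p / (2 * u)) / a i = 1 + 1 / (complex_of_real r * a i)"
    "1 + 2 * a i / complex_of_real p * complex_of_real u = 1 + complex_of_real r * a i" for i
    using u p by (simp_all add: r_def field_simps)
  then have "(\<Prod>i\<in>I. (1 - complex_of_real (- p / (2 * u)) / a i) powr (- b i))
      = (\<Prod>i\<in>I. a i powr b i * complex_of_real r powr b i
            * (1 + 2 * a i / complex_of_real p * complex_of_real u) powr (- b i))"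
    using a r by (simp add: one_plus_inverse_powr)
  also have "\<dots> = (\<Prod>i\<in>I. a i powr b i) * complex_of_real r powr (\<Sum>i\<in>I. b i)
      * (\<Prod>i\<in>I. (1 + 2 * a i / complex_of_real p * complex_of_real u) powr (- b i))"
    using r by (simp add: prod.distrib powr_sum)
  also have "complex_of_real r powr (\<Sum>i\<in>I. b i)
      = complex_of_real (2 / p) powr (\<Sum>i\<in>I. b i) * complex_of_real u powr (\<Sum>i\<in>I. b i)"
    using u p unfolding r_def by (simp add: powr_times_real[symmetric])
  finally have "(\<Prod>i\<in>I. (1 - complex_of_real (- p / (2 * u)) / a i) powr (- b i))
      = (\<Prod>i\<in>I. a i powr b i) * (complex_of_real (2 / p) powr (\<Sum>i\<in>I. b i)
          * complex_of_real u powr (\<Sum>i\<in>I. b i))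
        * (\<Prod>i\<in>I. (1 + 2 * a i / complex_of_real p * complex_of_real u) powr (- b i))" .
  moreover have "complex_of_real (craig_weight u)
      = 1 / 2 * (complex_of_real u powr (- 1 / 2) * complex_of_real (1 - u) powr (- 1 / 2))"
    using u by (simp add: craig_weight_eq_powr powr_of_real[symmetric])
  moreover have "complex_of_real u powr (- 1 / 2 + (\<Sum>i\<in>I. b i))
      = complex_of_real u powr (- 1 / 2) * complex_of_real u powr (\<Sum>i\<in>I. b i)"
    by (rule powr_add)
  ultimately show ?thesis
    by (simp only: mult_ac)
qed

lemma Re_one_plus_scaled_pos:
  fixes a :: complex and p u :: real
  assumes "0 < Re a" "0 < p" "0 \<le> u"
  shows "0 < Re (1 + 2 * a / complex_of_real p * complex_of_real u)"
proof -
  have "0 \<le> 2 * Re a / p * u"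
    using assms by simp
  then show ?thesis
    by simp
qed

lemma continuous_on_prod_one_plus_scaled_powr:
  fixes a b :: "nat \<Rightarrow> complex" and p :: real and S :: "real set"
  assumes "\<And>i. i \<in> I \<Longrightarrow> 0 < Re (a i)" "0 < p" "S \<subseteq> {0..}"
  shows "continuous_on S (\<lambda>u. \<Prod>i\<in>I. (1 + 2 * a i / complex_of_real p * complex_of_real u) powr (- b i))"
proof (intro continuous_on_prod continuous_on_powr_complex)
  fix i
  assume "i \<in> I"
  then have "0 < Re (1 + 2 * a i / complex_of_real p * complex_of_real u)" if "u \<in> S" for u
    using assms that by (intro Re_one_plus_scaled_pos) auto
  then show "S \<subseteq> {u. 0 \<le> Re (1 + 2 * a i / complex_of_real p * complex_of_real u)
        \<or> Im (1 + 2 * a i / complex_of_real p * complex_of_real u) \<noteq> 0}"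
    and "\<And>u. u \<in> S \<Longrightarrow> 1 + 2 * a i / complex_of_real p * complex_of_real u = 0 \<Longrightarrow> 0 < Re (- b i)"
    by (fastforce intro: less_imp_le)+
qed (use assms(2) in \<open>auto intro!: continuous_intros\<close>)

lemma set_integrable_craig_integrand:
  fixes a b :: "nat \<Rightarrow> complex" and I :: "nat set" and p :: real
  assumes a: "\<And>i. i \<in> I \<Longrightarrow> 0 < Re (a i)" and p: "0 < p" and B: "0 < Re (\<Sum>i\<in>I. b i)"
  shows "set_integrable lborel {0<..<1::real} (\<lambda>u. complex_of_real u powr (- 1 / 2 + (\<Sum>i\<in>I. b i))
      * complex_of_real (1 - u) powr (- 1 / 2)
      * (\<Prod>i\<in>I. (1 + 2 * a i / complex_of_real p * complex_of_real u) powr (- b i)))"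
    (is "set_integrable _ _ ?T")
proof -
  let ?Z = "\<lambda>u. \<Prod>i\<in>I. (1 + 2 * a i / complex_of_real p * complex_of_real u) powr (- b i)"
  have "compact (?Z ` {0..1})"
    using a p by (intro compact_continuous_image continuous_on_prod_one_plus_scaled_powr) auto
  then have "bounded (?Z ` {0..1})"
    by (rule compact_imp_bounded)
  then obtain C where "\<forall>z \<in> ?Z ` {0..1}. norm z \<le> C"
    unfolding bounded_iff ..
  then have C: "norm (?Z u) \<le> C" if "u \<in> {0..1}" for u
    using that by auto
  have "continuous_on {0<..<1} ?T"
    using a p
    by (intro continuous_on_mult continuous_on_prod_one_plus_scaled_powr continuous_intros) auto
  then have meas: "set_borel_measurable lborel {0<..<1} ?T"
    unfolding set_borel_measurable_def using borel_measurable_continuous_on_indicator[of _ ?T] by simp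
  have bound: "norm (?T u) \<le> 2 * C * craig_weight u" if "u \<in> {0<..<1}" for u
  proof -
    have u: "0 < u" "u < 1"
      using that by auto
    have "norm (complex_of_real u powr (- 1 / 2 + (\<Sum>i\<in>I. b i))) = u powr (- 1 / 2 + Re (\<Sum>i\<in>I. b i))"
      using u by (subst norm_powr_real_powr) auto
    also have "\<dots> \<le> u powr (- 1 / 2)"
      using u B by (intro powr_mono') auto
    finally have "norm (complex_of_real u powr (- 1 / 2 + (\<Sum>i\<in>I. b i))) \<le> u powr (- 1 / 2)" .
    moreover have "norm (complex_of_real (1 - u) powr (- 1 / 2)) = (1 - u) powr (- 1 / 2)"
      using u by (subst norm_powr_real_powr) auto
    moreover have "norm (?Z u) \<le> C"
      using u by (intro C) auto
    ultimately have "norm (?T u) \<le> u powr (- 1 / 2) * (1 - u) powr (- 1 / 2) * C"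
      unfolding norm_mult by (intro mult_mono) auto
    then show ?thesis
      using u by (simp add: craig_weight_eq_powr mult_ac)
  qed
  have "set_integrable lborel {0<..<1} (\<lambda>u. 2 * C * craig_weight u)"
    using set_integrable_craig_weight by (rule set_integrable_mult_right)
  moreover have "AE u in lborel. u \<in> {0<..<1} \<longrightarrow> norm (?T u) \<le> norm (2 * C * craig_weight u)"
  proof (intro AE_I2 impI)
    fix u :: real
    assume "u \<in> {0<..<1}"
    then have "norm (?T u) \<le> 2 * C * craig_weight u"
      by (rule bound)
    also have "\<dots> \<le> norm (2 * C * craig_weight u)"
      by simp
    finally show "norm (?T u) \<le> norm (2 * C * craig_weight u)" .
  qed
  ultimately show ?thesis
    by (rule set_integrable_bound[OF _ meas])
qed

lemma craig_mgf_component: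
  fixes a b :: "nat \<Rightarrow> complex" and I :: "nat set" and p :: real
  assumes a: "\<And>i. i \<in> I \<Longrightarrow> 0 < Re (a i)" and p: "0 < p" and B: "0 < Re (\<Sum>i\<in>I. b i)"
  defines "E \<equiv> \<lambda>u. complex_of_real (craig_weight u)
      * (\<Prod>i\<in>I. (1 - complex_of_real (- p / (2 * u)) / a i) powr (- b i))"
  shows "set_integrable lborel {0<..<1} E"
    and "(LBINT u:{0<..<1}. E u)
       = 1 / 2 * (\<Prod>i\<in>I. a i powr b i) * complex_of_real (2 / p) powr (\<Sum>i\<in>I. b i)
         * (LBINT u:{0<..<1}. complex_of_real u powr (- 1 / 2 + (\<Sum>i\<in>I. b i))
             * complex_of_real (1 - u) powr (- 1 / 2)
             * (\<Prod>i\<in>I. (1 + 2 * a i / complex_of_real p * complex_of_real u) powr (- b i)))"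
    (is "_ = ?c * (LBINT u:{0<..<1}. ?T u)")
proof -
  have E: "E u = ?c * ?T u" if "u \<in> {0<..<1}" for u
    using a p that unfolding E_def by (intro craig_weight_mgf_factorization) auto
  show "set_integrable lborel {0<..<1} E"
    using set_integrable_craig_integrand[OF a p B] by (subst set_integrable_cong[OF refl refl E]) auto
  have "(LBINT u:{0<..<1}. E u) = (LBINT u:{0<..<1}. ?c * ?T u)"
    using E by (intro set_lebesgue_integral_cong) auto
  then show "(LBINT u:{0<..<1}. E u) = ?c * (LBINT u:{0<..<1}. ?T u)"
    by simp
qed

lemma set_integral_sum:
  fixes f :: "'i \<Rightarrow> 'a \<Rightarrow> 'b::{banach, second_countable_topology}"
  assumes "\<And>i. i \<in> I \<Longrightarrow> set_integrable M A (f i)"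
  shows "(LINT x:A|M. (\<Sum>i\<in>I. f i x)) = (\<Sum>i\<in>I. LINT x:A|M. f i x)"
  using assms unfolding set_lebesgue_integral_def set_integrable_def scaleR_sum_right
  by (rule Bochner_Integration.integral_sum)

theorem corollary2:
  fixes M :: "'a measure" and \<gamma> :: "'a \<Rightarrow> real"
    and K :: nat and n :: "nat \<Rightarrow> nat"
    and c :: "nat \<Rightarrow> complex" and a b :: "nat \<Rightarrow> nat \<Rightarrow> complex"
    and p :: real
  assumes "prob_space M"
    and "\<gamma> \<in> borel_measurable M"
    and "AE \<omega> in M. \<gamma> \<omega> \<ge> 0"
    and mgf: "\<And>s::real. s \<le> 0 \<Longrightarrow>
        complex_of_real (integral\<^sup>L M (\<lambda>\<omega>. exp (s * \<gamma> \<omega>)))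
          = (\<Sum>k<K. c k * (\<Prod>i<n k. (1 - complex_of_real s / a k i) powr (- b k i)))"
    and "\<And>k i. k < K \<Longrightarrow> i < n k \<Longrightarrow> Re (a k i) > 0"
    and "\<And>k. k < K \<Longrightarrow> (\<Sum>i<n k. b k i) \<in> \<real> \<and> Re (\<Sum>i<n k. b k i) > 0"
    and "(\<Sum>k<K. c k) = 1"
    and "p > 0"
  shows "complex_of_real (integral\<^sup>L M (\<lambda>\<omega>. Qfun (sqrt (p * \<gamma> \<omega>))))
    = (1 / (2 * pi)) * (\<Sum>k<K. c k * (\<Prod>i<n k. a k i powr b k i)
        * complex_of_real (2 / p) powr (\<Sum>i<n k. b k i)
        * (LBINT u:{0<..<1}.
             complex_of_real u powr (- 1 / 2 + (\<Sum>i<n k. b k i))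
             * complex_of_real (1 - u) powr (- 1 / 2)
             * (\<Prod>i<n k. (1 + 2 * a k i / complex_of_real p * complex_of_real u) powr (- b k i))))"
proof -
  interpret prob_space M by fact
  \<comment> \<open>Neither \<open>\<Sum>k<K. c k = 1\<close> nor \<open>B\<^sub>k \<in> \<real>\<close> is needed; only \<open>Re B\<^sub>k > 0\<close> enters, for integrability at \<open>u = 0\<close>.\<close>
  let ?S = "{0<..<1::real}"
  let ?L = "\<lambda>u. expectation (\<lambda>\<omega>. exp ((- p / (2 * u)) * \<gamma> \<omega>))"
  let ?E = "\<lambda>k u. complex_of_real (craig_weight u)
      * (\<Prod>i<n k. (1 - complex_of_real (- p / (2 * u)) / a k i) powr (- b k i))"
  have weighted_mgf: "complex_of_real (craig_weight u * ?L u) = (\<Sum>k<K. c k * ?E k u)" if "u \<in> ?S" for u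
  proof -
    have "complex_of_real (?L u)
        = (\<Sum>k<K. c k * (\<Prod>i<n k. (1 - complex_of_real (- p / (2 * u)) / a k i) powr (- b k i)))"
      using that \<open>p > 0\<close> by (intro mgf) (auto simp: divide_nonneg_pos)
    then show ?thesis
      by (simp add: sum_distrib_left mult_ac)
  qed
  note component = craig_mgf_component[of "{..<n k}" "a k" p "b k" for k]
  have "expectation (\<lambda>\<omega>. Qfun (sqrt (p * \<gamma> \<omega>))) = 1 / pi * (LBINT u:?S. craig_weight u * ?L u)"
    using expectation_Qfun_Craig[OF assms(2,3,8)] by (simp add: field_simps)
  then have "complex_of_real (expectation (\<lambda>\<omega>. Qfun (sqrt (p * \<gamma> \<omega>))))
      = 1 / pi * complex_of_real (LBINT u:?S. craig_weight u * ?L u)"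
    by simp
  also have "complex_of_real (LBINT u:?S. craig_weight u * ?L u) = (LBINT u:?S. \<Sum>k<K. c k * ?E k u)"
    unfolding set_integral_complex_of_real[symmetric]
    by (rule set_lebesgue_integral_cong) (simp, blast intro: weighted_mgf)
  also have "\<dots> = (\<Sum>k<K. c k * (LBINT u:?S. ?E k u))"
    using component(1) assms(5,6,8) by (subst set_integral_sum) auto
  also have "\<dots> = (\<Sum>k<K. c k * (1 / 2 * (\<Prod>i<n k. a k i powr b k i)
        * complex_of_real (2 / p) powr (\<Sum>i<n k. b k i)
        * (LBINT u:?S. complex_of_real u powr (- 1 / 2 + (\<Sum>i<n k. b k i))
             * complex_of_real (1 - u) powr (- 1 / 2)
             * (\<Prod>i<n k. (1 + 2 * a k i / complex_of_real p * complex_of_real u) powr (- b k i)))))"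
    using component(2) assms(5,6,8) by (intro sum.cong) auto
  finally show ?thesis
    by (simp add: sum_distrib_left mult_ac)
qed

end
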